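(* Fix an automaton $i$, a start time $t$, a length $h$ and a canonical transition set $\mathcal C_{i,t,h}$. For any state $s\in A$, the set $\{F^h(i,r,s,t): r\in\{0,1\}^h\}$ has at most $|\mathcal C_{i,t,h}|$ elements.
   Context: $A$ is the finite state space of a family of automata; $F^h(i,r,s,t)\in A$ is the state that automaton $i$, starting in state $s$ at time $t$, reaches after reading the bits of $r\in\{0,1\}^h$ at times $t,\dots,t+h-1$. For fixed $i,t,h$, $(s_1,s_2)\sim(s_1',s_2')$ means: for all $r\in\{0,1\}^h$, $F^h(i,r,s_1,t)=s_2\iff F^h(i,r,s_1',t)=s_2'$. A canonical transition set is a set $\mathcal C_{i,t,h}\subseteq A\times A$ such that every pair in $A\times A$ is $\sim$-equivalent to some pair of $\mathcal C_{i,t,h}$. *)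

theory Defs
  imports Main
begin

text \<open>A family of automata with finite state space 'a (the type), indexed by 'i,
  with time-dependent one-step transition function
  delta i b s t = state of automaton i after reading bit b in state s at time t.\<close>

fun Fh :: "('i \<Rightarrow> bool \<Rightarrow> 'a \<Rightarrow> nat \<Rightarrow> 'a) \<Rightarrow> 'i \<Rightarrow> bool list \<Rightarrow> 'a \<Rightarrow> nat \<Rightarrow> 'a" where
  "Fh delta i [] s t = s"
| "Fh delta i (b # r) s t = Fh delta i r (delta i b s t) (Suc t)"

definition trans_equiv ::
  "('i \<Rightarrow> bool \<Rightarrow> 'a \<Rightarrow> nat \<Rightarrow> 'a) \<Rightarrow> 'i \<Rightarrow> nat \<Rightarrow> nat \<Rightarrow> 'a \<times> 'a \<Rightarrow> 'a \<times> 'a \<Rightarrow> bool" where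
  "trans_equiv delta i t h p q \<longleftrightarrow>
     (\<forall>r. length r = h \<longrightarrow>
        (Fh delta i r (fst p) t = snd p \<longleftrightarrow> Fh delta i r (fst q) t = snd q))"

definition canonical_transition_set ::
  "('i \<Rightarrow> bool \<Rightarrow> 'a \<Rightarrow> nat \<Rightarrow> 'a) \<Rightarrow> 'i \<Rightarrow> nat \<Rightarrow> nat \<Rightarrow> ('a \<times> 'a) set \<Rightarrow> bool" where
  "canonical_transition_set delta i t h C \<longleftrightarrow>
     (\<forall>p. \<exists>q\<in>C. trans_equiv delta i t h p q)"

end

theory Submission
  imports Defs
begin

text \<open>Map each state s' reachable from s to a representative in C of the pair (s, s').
  This map is injective: if two reachable states s', s'' share a representative, then
  (s, s') and (s, s'') are equivalent, so a word r leading from s to s' also leads from s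
  to s'', and s'' = s' because the end state of r is unique.\<close>

lemma trans_equiv_sym:
  "trans_equiv delta i t h p q \<Longrightarrow> trans_equiv delta i t h q p"
  unfolding trans_equiv_def by blast

lemma trans_equiv_trans:
  "trans_equiv delta i t h p q \<Longrightarrow> trans_equiv delta i t h q p' \<Longrightarrow> trans_equiv delta i t h p p'"
  unfolding trans_equiv_def by blast

lemma reachable_target_unique_up_to_trans_equiv:
  assumes "length r = h"
    and "trans_equiv delta i t h (s, Fh delta i r s t) (s, s')"
  shows "s' = Fh delta i r s t"
  using assms unfolding trans_equiv_def by auto

theorem proposition6p8:
  fixes delta :: "'i \<Rightarrow> bool \<Rightarrow> 'a::finite \<Rightarrow> nat \<Rightarrow> 'a"
    and i :: 'i and t h :: nat and C :: "('a \<times> 'a) set" and s :: 'a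
  assumes "canonical_transition_set delta i t h C"
  shows "card {Fh delta i r s t | r. length r = h} \<le> card C"
proof -
  let ?R = "{Fh delta i r s t | r. length r = h}"
  obtain rep where rep: "\<And>s'. rep s' \<in> C \<and> trans_equiv delta i t h (s, s') (rep s')"
  proof -
    have "\<forall>s'. \<exists>q. q \<in> C \<and> trans_equiv delta i t h (s, s') q"
      using assms unfolding canonical_transition_set_def by blast
    then show thesis
      using that by metis
  qed
  have "inj_on rep ?R"
  proof (rule inj_onI)
    fix x y assume "x \<in> ?R" and "y \<in> ?R" and "rep x = rep y"
    then obtain r where r: "length r = h" "x = Fh delta i r s t" by blast
    have "trans_equiv delta i t h (s, x) (s, y)"
      using rep[of x] rep[of y] \<open>rep x = rep y\<close> by (metis trans_equiv_sym trans_equiv_trans)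
    with r show "x = y"
      using reachable_target_unique_up_to_trans_equiv by metis
  qed
  moreover have "rep ` ?R \<subseteq> C"
    using rep by blast
  ultimately show ?thesis
    by (simp add: card_inj_on_le)
qed

end
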